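(* Let $M(A)$ be a $2n$-dimensional real Bott manifold with Kähler structure (RBK manifold), with Bott matrix $A=[a_{ij}]$ and $P$-matrix $P_A$, and fix a partition $\{1,\dots,2n\}=\coprod_{k=1}^n\{j_k,j_{k+n}\}$ with $A^{j_k}=A^{j_{k+n}}$ for all $k$. For $1\le i<j\le 2n$ put $b_{ji}=a_{ij}$, and put $b_{ji}=0$ if $i\ge j$. Then $$w_2(M(A))=\pi^*\Big(\sum_{i=1}^{2n}\big(b_{j_1i}+b_{j_2i}+\dots+b_{j_ni}\big)x_i^2\Big),$$ i.e. the second Stiefel–Whitney class is represented by the polynomial $\sum_{i}\big(b_{j_1i}+\dots+b_{j_ni}\big)x_i^2\in\mathbb F_2[x_1,\dots,x_{2n}]$. Moreover, $M(A)$ admits a Spin-structure if and only if for every $i$ either $b_{j_1i}+b_{j_2i}+\dots+b_{j_ni}\equiv 0 \pmod 2$ or $x_i^2\in \mathrm{Id}_{P_A}$.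
   Context: Real Bott manifolds: let $A=[a_{ij}]$ be an $m\times m$ strictly upper triangular matrix with entries in $\{0,1\}$. For $i=1,\dots,m-1$ let $s_i$ be the Euclidean motion of $\mathbb R^m$ given by $s_i=(\mathrm{diag}[1,\dots,1,(-1)^{a_{i,i+1}},\dots,(-1)^{a_{i,m}}],\ \tfrac12 e_i)$ (the entry $(-1)^{a_{i,i+1}}$ in position $(i+1,i+1)$, translation part having $\tfrac12$ in the $i$-th coordinate and $0$ elsewhere), and $s_m=(I,\tfrac12 e_m)$. The group $\Gamma(A)=\langle s_1,\dots,s_m\rangle$ is a torsion-free crystallographic group whose translation subgroup $\mathbb Z^m$ is generated by $s_1^2,\dots,s_m^2$; $M(A)=\mathbb R^m/\Gamma(A)$ is the real Bott manifold, and there is an extension $0\to\mathbb Z^m\to\Gamma(A)\xrightarrow{\pi}\mathbb Z_2^m\to 1$. Identify $H^*(\mathbb Z_2^m;\mathbb F_2)=\mathbb F_2[x_1,\dots,x_m]$, with $x_1,\dots,x_m$ the basis of $H^1$ dual to the images of $s_1,\dots,s_m$, and let $\pi^*:H^*(\mathbb Z_2^m;\mathbb F_2)\to H^*(\Gamma(A);\mathbb F_2)=H^*(M(A);\mathbb F_2)$. $P$-matrix: $P_A=[p_{ij}]$ is the $m\times m$ matrix with $p_{ii}=1$, $p_{ij}=2$ if $i<j$ and $a_{ij}=1$, and $p_{ij}=0$ otherwise. Define $\alpha,\beta:\{0,1,2,3\}\to\mathbb F_2$ by $\alpha(0)=0,\alpha(1)=1,\alpha(2)=1,\alpha(3)=0$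 and $\beta(0)=0,\beta(1)=1,\beta(2)=0,\beta(3)=1$. For $j=1,\dots,m$ set $\alpha_j=\sum_{i}\alpha(p_{ij})x_i$, $\beta_j=\sum_i\beta(p_{ij})x_i$, $\theta_j=\alpha_j\beta_j$; the characteristic ideal is $\mathrm{Id}_{P_A}=\langle\theta_1,\dots,\theta_m\rangle\subseteq\mathbb F_2[x_1,\dots,x_m]$. (Thus $\alpha_j+\beta_j=\sum_{i<j}a_{ij}x_i$.) The total Stiefel–Whitney class of $M(A)$ is $w(M(A))=\pi^*\big(\prod_{j=1}^m(1+\alpha_j+\beta_j)\big)$, and $\ker\pi^*$ in degree $2$ is $\mathrm{Id}_{P_A}$ in degree 2. RBK manifold: $m=2n$ and there exist $n$ disjoint subsets $\{j_1,j_{n+1}\},\dots,\{j_n,j_{2n}\}$ with $\coprod_{k=1}^n\{j_k,j_{k+n}\}=\{1,\dots,2n\}$ and $A^{j_k}=A^{j_{k+n}}$ for all $k$, where $A^j$ denotes the $j$-th column of $A$ (equivalently, by Ishida's theorem, $M(A)$ admits a Kähler structure). $M(A)$ has a Spin-structure iff $w_2(M(A))=0$. *)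

theory Defs
  imports Main "HOL-Library.Poly_Mapping" "HOL-Library.Z2"
begin

text \<open>Polynomials in F_2[x_1,x_2,...]: finitely supported maps from monomials
  (exponent vectors nat =>0 nat) to coefficients in the two-element field bit.\<close>
type_synonym f2poly = "(nat \<Rightarrow>\<^sub>0 nat) \<Rightarrow>\<^sub>0 bit"

definition Xv :: "nat \<Rightarrow> f2poly" where
  "Xv i = Poly_Mapping.single (Poly_Mapping.single i 1) 1"

definition mon_deg :: "(nat \<Rightarrow>\<^sub>0 nat) \<Rightarrow> nat" where
  "mon_deg mon = (\<Sum>i\<in>Poly_Mapping.keys mon. Poly_Mapping.lookup mon i)"

definition hom_part :: "nat \<Rightarrow> f2poly \<Rightarrow> f2poly" where
  "hom_part d p = Abs_poly_mapping (\<lambda>mon. if mon_deg mon = d then Poly_Mapping.lookup p mon else 0)"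

definition bott_matrix :: "nat \<Rightarrow> (nat \<Rightarrow> nat \<Rightarrow> nat) \<Rightarrow> bool" where
  "bott_matrix m A \<longleftrightarrow> (\<forall>i\<in>{1..m}. \<forall>j\<in>{1..m}. A i j \<in> {0,1} \<and> (j \<le> i \<longrightarrow> A i j = 0))"

definition P_mat :: "(nat \<Rightarrow> nat \<Rightarrow> nat) \<Rightarrow> nat \<Rightarrow> nat \<Rightarrow> nat" where
  "P_mat A i j = (if i = j then 1 else if i < j \<and> A i j = 1 then 2 else 0)"

fun alpha_f :: "nat \<Rightarrow> bit" where
  "alpha_f 0 = 0" | "alpha_f (Suc 0) = 1" | "alpha_f (Suc (Suc 0)) = 1" | "alpha_f _ = 0"

fun beta_f :: "nat \<Rightarrow> bit" where
  "beta_f 0 = 0" | "beta_f (Suc 0) = 1" | "beta_f (Suc (Suc 0)) = 0" | "beta_f _ = 1"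

definition alpha_j :: "nat \<Rightarrow> (nat \<Rightarrow> nat \<Rightarrow> nat) \<Rightarrow> nat \<Rightarrow> f2poly" where
  "alpha_j m A j = (\<Sum>i=1..m. Poly_Mapping.single 0 (alpha_f (P_mat A i j)) * Xv i)"

definition beta_j :: "nat \<Rightarrow> (nat \<Rightarrow> nat \<Rightarrow> nat) \<Rightarrow> nat \<Rightarrow> f2poly" where
  "beta_j m A j = (\<Sum>i=1..m. Poly_Mapping.single 0 (beta_f (P_mat A i j)) * Xv i)"

definition theta_j :: "nat \<Rightarrow> (nat \<Rightarrow> nat \<Rightarrow> nat) \<Rightarrow> nat \<Rightarrow> f2poly" where
  "theta_j m A j = alpha_j m A j * beta_j m A j"

text \<open>Characteristic ideal Id_{P_A} = <theta_1,...,theta_m> in F_2[x_1..x_m].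
  Cofactors are polynomials in the variables x_1..x_m only.\<close>
definition poly_in_vars :: "nat \<Rightarrow> f2poly \<Rightarrow> bool" where
  "poly_in_vars m p \<longleftrightarrow> (\<forall>mon\<in>Poly_Mapping.keys p. Poly_Mapping.keys mon \<subseteq> {1..m})"

definition char_ideal :: "nat \<Rightarrow> (nat \<Rightarrow> nat \<Rightarrow> nat) \<Rightarrow> f2poly set" where
  "char_ideal m A = {\<Sum>j=1..m. g j * theta_j m A j | g. \<forall>j. poly_in_vars m (g j)}"

text \<open>Polynomial whose image under pi^* is the total Stiefel-Whitney class.\<close>
definition sw_poly :: "nat \<Rightarrow> (nat \<Rightarrow> nat \<Rightarrow> nat) \<Rightarrow> f2poly" where
  "sw_poly m A = (\<Prod>j=1..m. 1 + alpha_j m A j + beta_j m A j)"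

definition w2_poly :: "nat \<Rightarrow> (nat \<Rightarrow> nat \<Rightarrow> nat) \<Rightarrow> f2poly" where
  "w2_poly m A = hom_part 2 (sw_poly m A)"

definition bmat :: "(nat \<Rightarrow> nat \<Rightarrow> nat) \<Rightarrow> nat \<Rightarrow> nat \<Rightarrow> nat" where
  "bmat A j i = (if i < j then A i j else 0)"

text \<open>Degree-2 classes P, Q of F_2[x_1..x_m] satisfy pi^*(P) = pi^*(Q) iff P - Q lies in
  the kernel of pi^* in degree 2, which is the degree-2 part of Id_{P_A}.\<close>
definition same_image :: "nat \<Rightarrow> (nat \<Rightarrow> nat \<Rightarrow> nat) \<Rightarrow> f2poly \<Rightarrow> f2poly \<Rightarrow> bool" where
  "same_image m A p q \<longleftrightarrow> p - q \<in> char_ideal m A"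

text \<open>Spin structure iff w_2 = 0 iff pi^*(w2_poly) = 0.\<close>
definition has_spin :: "nat \<Rightarrow> (nat \<Rightarrow> nat \<Rightarrow> nat) \<Rightarrow> bool" where
  "has_spin m A \<longleftrightarrow> same_image m A (w2_poly m A) 0"

end

theory Submission
  imports Defs
begin

text \<open>
  Over F_2 squaring is additive. The linear form alpha_j + beta_j equals
  L_j = \<Sum>_i b_ji x_i, so the total Stiefel-Whitney polynomial is \<Prod>_j (1 + L_j).
  Equal columns give L_(j_k) = L_(j_(k+n)), so this product is the square of
  \<Prod>_k (1 + L_(j_k)) = 1 + \<Sum>_k L_(j_k) + (terms of degree \<ge> 2), whose degree-2 part is
  (\<Sum>_k L_(j_k))^2 = \<Sum>_i (\<Sum>_k b_(j_k)i) x_i^2.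

  In degree 2 an element of the characteristic ideal is an F_2-combination of the
  theta_j = \<Sum>_l alpha(p_lj) x_l x_j. If a_li = 1 for some l < i, then x_i^2 and x_l x_i occur
  only in theta_i, both with coefficient 1, so they have equal coefficients in every element
  of the ideal. Hence a diagonal quadratic form with coefficient 1 at x_i^2 can lie in the
  ideal only if column i of A vanishes above the diagonal, and then theta_i = x_i^2.
\<close>

(* Otherwise simp turns sums of bits into parities of cardinalities. *)
declare mult_bit_eq_and [simp del] add_bit_eq_xor [simp del]

lemma power2_add_char2:
  fixes a b :: "'a::comm_semiring_1"
  assumes "(2::'a) = 0"
  shows "(a + b)^2 = a^2 + b^2"
  by (simp add: power2_sum assms)

lemma power2_sum_char2:
  fixes f :: "'b \<Rightarrow> 'a::comm_semiring_1"
  assumes "(2::'a) = 0"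
  shows "(\<Sum>i\<in>S. f i)^2 = (\<Sum>i\<in>S. f i ^ 2)"
proof (induction S rule: infinite_finite_induct)
  case (insert x F)
  then show ?case by (simp add: power2_add_char2[OF assms])
qed simp_all

lemma two_eq_0_f2poly: "(2::f2poly) = 0"
  by (metis bit_2_eq_0 single_numeral single_zero)

lemma power2_single_0_bit: "(Poly_Mapping.single 0 (c::bit))^2 = Poly_Mapping.single 0 c"
  by (cases c) simp_all

lemma of_nat_bit_eq_0_iff: "(of_nat k :: bit) = 0 \<longleftrightarrow> even k"
  by (induction k) auto

subsection \<open>Degrees of polynomials\<close>

lemma mon_deg_eq_sum:
  assumes "finite S" "Poly_Mapping.keys mon \<subseteq> S"
  shows "mon_deg mon = (\<Sum>i\<in>S. Poly_Mapping.lookup mon i)"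
  unfolding mon_deg_def using assms by (intro sum.mono_neutral_left) (auto simp: in_keys_iff)

lemma mon_deg_add [simp]: "mon_deg (a + b) = mon_deg a + mon_deg b"
proof -
  let ?S = "Poly_Mapping.keys a \<union> Poly_Mapping.keys b"
  have "mon_deg (a + b) = (\<Sum>i\<in>?S. Poly_Mapping.lookup (a + b) i)"
    using keys_add[of a b] by (intro mon_deg_eq_sum) auto
  also have "\<dots> = (\<Sum>i\<in>?S. Poly_Mapping.lookup a i) + (\<Sum>i\<in>?S. Poly_Mapping.lookup b i)"
    by (simp add: lookup_add sum.distrib)
  also have "\<dots> = mon_deg a + mon_deg b"
    using mon_deg_eq_sum[of ?S a] mon_deg_eq_sum[of ?S b] by simp
  finally show ?thesis .
qed

lemma mon_deg_single [simp]: "mon_deg (Poly_Mapping.single i k) = k"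
  unfolding mon_deg_def by simp

lemma mon_deg_zero [simp]: "mon_deg 0 = 0"
  unfolding mon_deg_def by simp

lemma mon_deg_eq_0_iff [simp]: "mon_deg mon = 0 \<longleftrightarrow> mon = 0"
  unfolding mon_deg_def by (auto simp: in_keys_iff) (metis ex_in_conv in_keys_iff keys_eq_empty)

definition homogeneous :: "nat \<Rightarrow> ((nat \<Rightarrow>\<^sub>0 nat) \<Rightarrow>\<^sub>0 'a::zero) \<Rightarrow> bool" where
  "homogeneous d p \<longleftrightarrow> (\<forall>mon\<in>Poly_Mapping.keys p. mon_deg mon = d)"

definition vanishes_below :: "nat \<Rightarrow> ((nat \<Rightarrow>\<^sub>0 nat) \<Rightarrow>\<^sub>0 'a::zero) \<Rightarrow> bool" where
  "vanishes_below d p \<longleftrightarrow> (\<forall>mon\<in>Poly_Mapping.keys p. d \<le> mon_deg mon)"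

lemma homogeneous_add: "homogeneous d p \<Longrightarrow> homogeneous d q \<Longrightarrow> homogeneous d (p + q)"
  unfolding homogeneous_def using keys_add[of p q] by blast

lemma homogeneous_sum: "(\<And>i. i \<in> S \<Longrightarrow> homogeneous d (f i)) \<Longrightarrow> homogeneous d (sum f S)"
proof (induction S rule: infinite_finite_induct)
  case (insert x F)
  then show ?case by (simp add: homogeneous_add)
qed (simp_all add: homogeneous_def)

lemma homogeneous_mult:
  fixes p q :: "(nat \<Rightarrow>\<^sub>0 nat) \<Rightarrow>\<^sub>0 'a::comm_semiring_0"
  shows "homogeneous a p \<Longrightarrow> homogeneous b q \<Longrightarrow> homogeneous (a + b) (p * q)"
  unfolding homogeneous_def using keys_mult[of p q] by auto

lemma homogeneous_single_0: "homogeneous 0 (Poly_Mapping.single 0 c)"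
  unfolding homogeneous_def by simp

lemma homogeneous_Xv: "homogeneous 1 (Xv i)"
  unfolding homogeneous_def Xv_def by simp

lemma homogeneous_imp_vanishes_below: "homogeneous d p \<Longrightarrow> vanishes_below d p"
  unfolding homogeneous_def vanishes_below_def by simp

lemma vanishes_below_add: "vanishes_below d p \<Longrightarrow> vanishes_below d q \<Longrightarrow> vanishes_below d (p + q)"
  unfolding vanishes_below_def using keys_add[of p q] by blast

lemma vanishes_below_mult:
  fixes p q :: "(nat \<Rightarrow>\<^sub>0 nat) \<Rightarrow>\<^sub>0 'a::comm_semiring_0"
  shows "vanishes_below a p \<Longrightarrow> vanishes_below b q \<Longrightarrow> vanishes_below (a + b) (p * q)"
  unfolding vanishes_below_def using keys_mult[of p q] by (force intro: add_mono)

lemma vanishes_below_mono: "d \<le> e \<Longrightarrow> vanishes_below e p \<Longrightarrow> vanishes_below d p"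
  unfolding vanishes_below_def by force

lemma vanishes_below_diff_constant:
  fixes p :: "(nat \<Rightarrow>\<^sub>0 nat) \<Rightarrow>\<^sub>0 'a::ab_group_add"
  shows "vanishes_below 1 (p - Poly_Mapping.single 0 (Poly_Mapping.lookup p 0))"
  unfolding vanishes_below_def
proof
  fix mon assume "mon \<in> Poly_Mapping.keys (p - Poly_Mapping.single 0 (Poly_Mapping.lookup p 0))"
  then have "mon \<noteq> 0" by (auto simp: in_keys_iff lookup_minus)
  then show "1 \<le> mon_deg mon" by (metis mon_deg_eq_0_iff less_one not_le)
qed

lemma lookup_eq_0_if_vanishes_below:
  "vanishes_below d p \<Longrightarrow> mon_deg mon < d \<Longrightarrow> Poly_Mapping.lookup p mon = 0"
  unfolding vanishes_below_def by (meson in_keys_iff not_le)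

lemma lookup_hom_part:
  "Poly_Mapping.lookup (hom_part d p) mon = (if mon_deg mon = d then Poly_Mapping.lookup p mon else 0)"
proof -
  have "finite {mon. (if mon_deg mon = d then Poly_Mapping.lookup p mon else 0) \<noteq> 0}"
    by (rule finite_subset[of _ "Poly_Mapping.keys p"]) (auto simp: in_keys_iff)
  then show ?thesis unfolding hom_part_def by simp
qed

lemma hom_part_add: "hom_part d (p + q) = hom_part d p + hom_part d q"
  by (rule poly_mapping_eqI) (simp add: lookup_hom_part lookup_add)

lemma hom_part_homogeneous: "homogeneous d p \<Longrightarrow> hom_part d p = p"
  unfolding homogeneous_def
  by (rule poly_mapping_eqI) (metis in_keys_iff lookup_hom_part)

lemma hom_part_one: "0 < d \<Longrightarrow> hom_part d 1 = 0"
  by (rule poly_mapping_eqI) (simp add: lookup_hom_part lookup_one when_def)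

lemma hom_part_vanishes_below: "vanishes_below e p \<Longrightarrow> d < e \<Longrightarrow> hom_part d p = 0"
  by (rule poly_mapping_eqI) (simp add: lookup_hom_part lookup_eq_0_if_vanishes_below)

lemma prod_one_add_homogeneous_1:
  fixes f :: "'b \<Rightarrow> f2poly"
  assumes "finite S" "\<forall>k\<in>S. homogeneous 1 (f k)"
  obtains R where "vanishes_below 2 R" "(\<Prod>k\<in>S. 1 + f k) = 1 + (\<Sum>k\<in>S. f k) + R"
  using assms
proof (induction S arbitrary: thesis rule: finite_induct)
  case empty
  show ?case by (rule empty.prems(1)[of 0]) (simp_all add: vanishes_below_def)
next
  case (insert x F)
  obtain R where R: "vanishes_below 2 R" "(\<Prod>k\<in>F. 1 + f k) = 1 + (\<Sum>k\<in>F. f k) + R"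
    using insert by auto
  have fx: "homogeneous 1 (f x)" and sF: "homogeneous 1 (\<Sum>k\<in>F. f k)"
    using insert.prems by (auto intro: homogeneous_sum)
  let ?R = "R + f x * (\<Sum>k\<in>F. f k) + f x * R"
  have "vanishes_below 2 ?R"
  proof (intro vanishes_below_add)
    show "vanishes_below 2 (f x * sum f F)"
      using homogeneous_imp_vanishes_below[OF homogeneous_mult[OF fx sF]] by (simp add: numeral_2_eq_2)
    show "vanishes_below 2 (f x * R)"
      using vanishes_below_mult[OF homogeneous_imp_vanishes_below[OF fx] R(1)]
      by (rule vanishes_below_mono[rotated]) simp
  qed (rule R(1))
  moreover have "(\<Prod>k\<in>insert x F. 1 + f k) = 1 + (\<Sum>k\<in>insert x F. f k) + ?R"
    using insert R(2) by (simp add: algebra_simps)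
  ultimately show ?case using insert.prems(1) by blast
qed

lemma hom_part_2_power2_prod_one_add:
  fixes f :: "'b \<Rightarrow> f2poly"
  assumes "finite S" "\<forall>k\<in>S. homogeneous 1 (f k)"
  shows "hom_part 2 ((\<Prod>k\<in>S. 1 + f k)^2) = (\<Sum>k\<in>S. f k)^2"
proof -
  obtain R where R: "vanishes_below 2 R" "(\<Prod>k\<in>S. 1 + f k) = 1 + (\<Sum>k\<in>S. f k) + R"
    using prod_one_add_homogeneous_1[OF assms] .
  let ?E = "\<Sum>k\<in>S. f k"
  have "homogeneous 1 ?E"
    using assms(2) by (intro homogeneous_sum) simp
  then have "homogeneous 2 (?E^2)"
    using homogeneous_mult[of 1 ?E 1 ?E] by (simp add: power2_eq_square numeral_2_eq_2)
  moreover have "vanishes_below 4 (R^2)"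
    using vanishes_below_mult[OF R(1) R(1)] by (simp add: power2_eq_square)
  ultimately show ?thesis
    unfolding R(2) power2_add_char2[OF two_eq_0_f2poly] hom_part_add
    by (simp add: hom_part_one hom_part_homogeneous hom_part_vanishes_below)
qed

lemma Xv_mult: "Xv l * Xv j = Poly_Mapping.single (Poly_Mapping.single l 1 + Poly_Mapping.single j 1) 1"
  unfolding Xv_def by (simp add: mult_single)

lemma Xv_power2: "Xv i ^ 2 = Poly_Mapping.single (Poly_Mapping.single i 2) 1"
  unfolding power2_eq_square Xv_mult by (simp add: single_add[symmetric] numeral_2_eq_2)

lemma mon_deg_single_1_add_single_1: "mon_deg (Poly_Mapping.single l 1 + Poly_Mapping.single i 1) = 2"
  by simp

lemma single_1_add_single_1_eq_single_2_iff:
  "Poly_Mapping.single l (1::nat) + Poly_Mapping.single j 1 = Poly_Mapping.single i 2 \<longleftrightarrow> l = i \<and> j = i"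
proof
  assume "Poly_Mapping.single l (1::nat) + Poly_Mapping.single j 1 = Poly_Mapping.single i 2"
  then have "Poly_Mapping.lookup (Poly_Mapping.single l (1::nat) + Poly_Mapping.single j 1) x =
      Poly_Mapping.lookup (Poly_Mapping.single i 2) x" for x
    by simp
  from this[of l] this[of j] show "l = i \<and> j = i"
    by (auto simp: lookup_add lookup_single when_def split: if_splits)
qed (simp add: single_add[symmetric] numeral_2_eq_2)

lemma single_1_add_single_1_eq_iff:
  assumes "k \<noteq> i"
  shows "Poly_Mapping.single l (1::nat) + Poly_Mapping.single j 1 =
      Poly_Mapping.single k 1 + Poly_Mapping.single i 1 \<longleftrightarrow> l = k \<and> j = i \<or> l = i \<and> j = k"
proof
  assume "Poly_Mapping.single l (1::nat) + Poly_Mapping.single j 1 =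
      Poly_Mapping.single k 1 + Poly_Mapping.single i 1"
  then have "Poly_Mapping.lookup (Poly_Mapping.single l (1::nat) + Poly_Mapping.single j 1) x =
      Poly_Mapping.lookup (Poly_Mapping.single k 1 + Poly_Mapping.single i 1) x" for x
    by simp
  from this[of l] this[of j] show "l = k \<and> j = i \<or> l = i \<and> j = k"
    using assms by (auto simp: lookup_add lookup_single when_def split: if_splits)
qed (auto simp: add.commute)

lemma single_2_neq_single_1_add_single_1:
  "k \<noteq> i \<Longrightarrow> Poly_Mapping.single l (2::nat) \<noteq> Poly_Mapping.single k 1 + Poly_Mapping.single i 1"
  by (metis single_1_add_single_1_eq_single_2_iff)

lemma single_eq_single_iff: "v \<noteq> 0 \<Longrightarrow> Poly_Mapping.single k v = Poly_Mapping.single k' v \<longleftrightarrow> k = k'"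
  by (metis lookup_single_eq lookup_single_not_eq)

lemma lookup_single_0_mult:
  "Poly_Mapping.lookup (Poly_Mapping.single 0 c * p) mon = c * Poly_Mapping.lookup p mon"
  by (simp add: mult_map_scale_conv_mult[symmetric] map.rep_eq when_def)

lemma lookup_sum_Xv_power2_square:
  "i \<in> {1..m} \<Longrightarrow>
    Poly_Mapping.lookup (\<Sum>i'=1..m. Poly_Mapping.single 0 (c i') * Xv i' ^ 2) (Poly_Mapping.single i 2) = c i"
  by (simp add: lookup_sum Xv_power2 mult_single lookup_single when_def single_eq_single_iff
     )

lemma lookup_sum_Xv_power2_mixed:
  "l \<noteq> i \<Longrightarrow>
    Poly_Mapping.lookup (\<Sum>i'=1..m. Poly_Mapping.single 0 (c i') * Xv i' ^ 2)
      (Poly_Mapping.single l 1 + Poly_Mapping.single i 1) = 0"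
  by (simp add: lookup_sum Xv_power2 mult_single lookup_single when_def
      single_2_neq_single_1_add_single_1 del: One_nat_def)

subsection \<open>The second Stiefel-Whitney class\<close>

lemma bott_matrix_entry:
  assumes "bott_matrix m A" "i \<in> {1..m}" "j \<in> {1..m}"
  shows "A i j = 0 \<or> A i j = 1" and "j \<le> i \<Longrightarrow> A i j = 0"
  using assms unfolding bott_matrix_def by blast+

lemma bmat_eq_entry: "bott_matrix m A \<Longrightarrow> i \<in> {1..m} \<Longrightarrow> j \<in> {1..m} \<Longrightarrow> bmat A j i = A i j"
  unfolding bott_matrix_def bmat_def by (cases "i < j") auto

lemma alpha_f_P_mat: "alpha_f (P_mat A i j) = (if i = j \<or> i < j \<and> A i j = 1 then 1 else 0)"
  by (simp add: P_mat_def numeral_2_eq_2)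

lemma beta_j_eq_Xv: "j \<in> {1..m} \<Longrightarrow> beta_j m A j = Xv j"
proof -
  assume j: "j \<in> {1..m}"
  have "beta_j m A j = (\<Sum>i=1..m. if i = j then Xv i else 0)"
    unfolding beta_j_def by (rule sum.cong) (auto simp: P_mat_def numeral_2_eq_2)
  then show ?thesis using j by simp
qed

definition column_form :: "nat \<Rightarrow> (nat \<Rightarrow> nat \<Rightarrow> nat) \<Rightarrow> nat \<Rightarrow> f2poly" where
  "column_form m A j = (\<Sum>i=1..m. Poly_Mapping.single 0 (of_nat (bmat A j i)) * Xv i)"

lemma homogeneous_column_form: "homogeneous 1 (column_form m A j)"
  unfolding column_form_def
  by (intro homogeneous_sum) (metis homogeneous_mult homogeneous_single_0 homogeneous_Xv add_0_left)

lemma alpha_j_add_beta_j: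
  assumes "bott_matrix m A" "j \<in> {1..m}"
  shows "alpha_j m A j + beta_j m A j = column_form m A j"
proof -
  have "alpha_f (P_mat A i j) + beta_f (P_mat A i j) = of_nat (bmat A j i)" if i: "i \<in> {1..m}" for i
    using bott_matrix_entry[OF assms(1) i assms(2)] unfolding P_mat_def bmat_def
    by (cases "i = j"; cases "i < j") (auto simp: numeral_2_eq_2)
  then show ?thesis
    unfolding alpha_j_def beta_j_def column_form_def sum.distrib[symmetric]
    by (intro sum.cong) (simp_all add: distrib_right[symmetric] single_add[symmetric])
qed

lemma column_form_eq_if_columns_eq:
  assumes "bott_matrix m A" "j \<in> {1..m}" "j' \<in> {1..m}" "\<forall>i\<in>{1..m}. A i j = A i j'"
  shows "column_form m A j = column_form m A j'"
  unfolding column_form_def using assms by (intro sum.cong) (simp_all add: bmat_eq_entry)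

lemma sw_poly_eq_prod_column_form:
  "bott_matrix m A \<Longrightarrow> sw_poly m A = (\<Prod>j=1..m. 1 + column_form m A j)"
  unfolding sw_poly_def by (rule prod.cong) (simp_all add: add.assoc alpha_j_add_beta_j)

lemma prod_paired_eq_power2:
  fixes f :: "nat \<Rightarrow> 'a::comm_monoid_mult"
  assumes "bij_betw jj {1..2*n} {1..2*n}" "\<forall>k\<in>{1..n}. f (jj (k + n)) = f (jj k)"
  shows "(\<Prod>j=1..2*n. f j) = (\<Prod>k=1..n. f (jj k))^2"
proof -
  have "(\<Prod>j=1..2*n. f j) = (\<Prod>k=1..2*n. f (jj k))"
    using prod.reindex_bij_betw[OF assms(1), of f] by simp
  also have "\<dots> = (\<Prod>k=1..n. f (jj k)) * (\<Prod>k=n+1..n+n. f (jj k))"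
  proof -
    have "{1..2*n} = {1..n} \<union> {n+1..n+n}" by auto
    then show ?thesis by (simp add: prod.union_disjoint)
  qed
  also have "(\<Prod>k=n+1..n+n. f (jj k)) = (\<Prod>k=1..n. f (jj (k + n)))"
    using prod.shift_bounds_cl_nat_ivl[of "\<lambda>k. f (jj k)" 1 n n] by simp
  also have "\<dots> = (\<Prod>k=1..n. f (jj k))"
    using assms(2) by simp
  finally show ?thesis by (simp add: power2_eq_square)
qed

lemma w2_poly_eq_power2_sum_column_form:
  assumes bott: "bott_matrix (2*n) A"
    and part: "bij_betw jj {1..2*n} {1..2*n}"
    and cols: "\<forall>k\<in>{1..n}. \<forall>i\<in>{1..2*n}. A i (jj k) = A i (jj (k+n))"
  shows "w2_poly (2*n) A = (\<Sum>k=1..n. column_form (2*n) A (jj k))^2"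
proof -
  have "column_form (2*n) A (jj (k + n)) = column_form (2*n) A (jj k)" if "k \<in> {1..n}" for k
    using that cols bij_betw_apply[OF part, of k] bij_betw_apply[OF part, of "k + n"]
    by (intro column_form_eq_if_columns_eq[OF bott]) auto
  then have "sw_poly (2*n) A = (\<Prod>k=1..n. 1 + column_form (2*n) A (jj k))^2"
    unfolding sw_poly_eq_prod_column_form[OF bott] by (intro prod_paired_eq_power2[OF part]) simp
  then show ?thesis
    unfolding w2_poly_def
    using hom_part_2_power2_prod_one_add[of "{1..n}" "\<lambda>k. column_form (2*n) A (jj k)"]
      homogeneous_column_form
    by simp
qed

lemma power2_sum_column_form:
  "(\<Sum>k\<in>K. column_form m A (jj k))^2 =
    (\<Sum>i=1..m. Poly_Mapping.single 0 (of_nat (\<Sum>k\<in>K. bmat A (jj k) i)) * Xv i ^ 2)"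
proof -
  have "(\<Sum>k\<in>K. column_form m A (jj k))^2 =
      (\<Sum>k\<in>K. \<Sum>i=1..m. Poly_Mapping.single 0 (of_nat (bmat A (jj k) i)) * Xv i ^ 2)"
    unfolding column_form_def power2_sum_char2[OF two_eq_0_f2poly] power_mult_distrib
      power2_single_0_bit ..
  also have "\<dots> = (\<Sum>i=1..m. \<Sum>k\<in>K. Poly_Mapping.single 0 (of_nat (bmat A (jj k) i)) * Xv i ^ 2)"
    by (rule sum.swap)
  finally show ?thesis
    by (simp only: single_of_nat) (simp only: of_nat_sum sum_distrib_right)
qed

subsection \<open>The characteristic ideal in degree two\<close>

lemma theta_j_eq:
  "j \<in> {1..m} \<Longrightarrow>
    theta_j m A j = (\<Sum>l=1..m. Poly_Mapping.single 0 (alpha_f (P_mat A l j)) * (Xv l * Xv j))"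
  unfolding theta_j_def beta_j_eq_Xv alpha_j_def by (simp add: sum_distrib_right mult.assoc)

lemma homogeneous_theta_j: "j \<in> {1..m} \<Longrightarrow> homogeneous 2 (theta_j m A j)"
  unfolding theta_j_eq
  by (intro homogeneous_sum)
    (metis homogeneous_mult homogeneous_single_0 homogeneous_Xv add_0_left one_add_one)

lemma theta_j_eq_Xv_power2:
  "i \<in> {1..m} \<Longrightarrow> \<forall>l\<in>{1..m}. l < i \<longrightarrow> A l i = 0 \<Longrightarrow> theta_j m A i = Xv i ^ 2"
proof -
  assume i: "i \<in> {1..m}" and col: "\<forall>l\<in>{1..m}. l < i \<longrightarrow> A l i = 0"
  have "alpha_j m A i = (\<Sum>l=1..m. if l = i then Xv l else 0)"
    unfolding alpha_j_def using col by (intro sum.cong) (auto simp: P_mat_def)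
  then show ?thesis
    using i unfolding theta_j_def beta_j_eq_Xv[OF i] by (simp add: power2_eq_square)
qed

lemma lookup_theta_j:
  "j \<in> {1..m} \<Longrightarrow> Poly_Mapping.lookup (theta_j m A j) mon =
    (\<Sum>l=1..m. alpha_f (P_mat A l j) when Poly_Mapping.single l 1 + Poly_Mapping.single j 1 = mon)"
  by (simp add: theta_j_eq lookup_sum Xv_mult mult_single lookup_single)

lemma lookup_theta_j_square:
  assumes "i \<in> {1..m}" "j \<in> {1..m}"
  shows "Poly_Mapping.lookup (theta_j m A j) (Poly_Mapping.single i 2) = (if j = i then 1 else 0)"
proof -
  have summand: "(alpha_f (P_mat A l j) when
      Poly_Mapping.single l (1::nat) + Poly_Mapping.single j 1 = Poly_Mapping.single i 2) =
      (if l = i then (if j = i then 1 else 0) else 0)" for l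
    unfolding single_1_add_single_1_eq_single_2_iff by (simp add: alpha_f_P_mat)
  show ?thesis
    unfolding lookup_theta_j[OF assms(2)] summand using assms(1) by simp
qed

lemma lookup_theta_j_mixed:
  assumes "l < i" "A l i = 1" "l \<in> {1..m}" "j \<in> {1..m}"
  shows "Poly_Mapping.lookup (theta_j m A j) (Poly_Mapping.single l 1 + Poly_Mapping.single i 1) =
    (if j = i then 1 else 0)"
proof -
  have summand: "(alpha_f (P_mat A l' j) when
      Poly_Mapping.single l' (1::nat) + Poly_Mapping.single j 1 = Poly_Mapping.single l 1 + Poly_Mapping.single i 1) =
      (if l' = l then (if j = i then 1 else 0) else 0)" for l'
    unfolding single_1_add_single_1_eq_iff[OF less_imp_neq[OF assms(1)]]
    using assms(1,2) by (auto simp: alpha_f_P_mat)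
  show ?thesis
    unfolding lookup_theta_j[OF assms(4)] summand using assms(3) by simp
qed

lemma poly_in_vars_zero: "poly_in_vars m 0"
  unfolding poly_in_vars_def by simp

lemma poly_in_vars_one: "poly_in_vars m 1"
  unfolding poly_in_vars_def by simp

lemma poly_in_vars_add: "poly_in_vars m p \<Longrightarrow> poly_in_vars m q \<Longrightarrow> poly_in_vars m (p + q)"
  unfolding poly_in_vars_def using keys_add[of p q] by blast

lemma zero_in_char_ideal: "0 \<in> char_ideal m A"
  unfolding char_ideal_def by (auto intro!: exI[of _ "\<lambda>_. 0"] simp: poly_in_vars_zero)

lemma add_in_char_ideal:
  assumes "p \<in> char_ideal m A" "q \<in> char_ideal m A"
  shows "p + q \<in> char_ideal m A"
proof -
  obtain g h where "p = (\<Sum>j=1..m. g j * theta_j m A j)" "\<forall>j. poly_in_vars m (g j)"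
    and "q = (\<Sum>j=1..m. h j * theta_j m A j)" "\<forall>j. poly_in_vars m (h j)"
    using assms unfolding char_ideal_def by blast
  then show ?thesis unfolding char_ideal_def
    by (auto intro!: exI[of _ "\<lambda>j. g j + h j"] simp: poly_in_vars_add sum.distrib distrib_right)
qed

lemma sum_in_char_ideal: "(\<And>i. i \<in> S \<Longrightarrow> f i \<in> char_ideal m A) \<Longrightarrow> sum f S \<in> char_ideal m A"
proof (induction S rule: infinite_finite_induct)
  case (insert x F)
  then show ?case by (simp add: add_in_char_ideal)
qed (simp_all add: zero_in_char_ideal)

lemma theta_j_in_char_ideal:
  assumes "i \<in> {1..m}"
  shows "theta_j m A i \<in> char_ideal m A"
proof -
  have "(\<Sum>j=1..m. (if j = i then 1 else 0) * theta_j m A j) = (\<Sum>j=1..m. if j = i then theta_j m A j else 0)"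
    by (rule sum.cong) simp_all
  also have "\<dots> = theta_j m A i"
    using assms by simp
  finally show ?thesis
    unfolding char_ideal_def
    by (auto intro!: exI[of _ "\<lambda>j. if j = i then 1 else 0"] simp: poly_in_vars_one poly_in_vars_zero)
qed

text \<open>Cofactors of positive degree only contribute in degree at least 3.\<close>
lemma char_ideal_coeffs_degree_2:
  assumes "p \<in> char_ideal m A"
  obtains d where "\<And>mon. mon_deg mon = 2 \<Longrightarrow>
    Poly_Mapping.lookup p mon = (\<Sum>j=1..m. d j * Poly_Mapping.lookup (theta_j m A j) mon)"
proof -
  obtain g where g: "p = (\<Sum>j=1..m. g j * theta_j m A j)"
    using assms unfolding char_ideal_def by blast
  define d where "d j = Poly_Mapping.lookup (g j) 0" for j
  have "Poly_Mapping.lookup (g j * theta_j m A j) mon = d j * Poly_Mapping.lookup (theta_j m A j) mon"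
    if j: "j \<in> {1..m}" and mon: "mon_deg mon = 2" for j mon
  proof -
    define h where "h = g j - Poly_Mapping.single 0 (d j)"
    have "vanishes_below (1 + 2) (h * theta_j m A j)"
      unfolding h_def d_def
      by (intro vanishes_below_mult vanishes_below_diff_constant
          homogeneous_imp_vanishes_below homogeneous_theta_j j)
    then have "Poly_Mapping.lookup (h * theta_j m A j) mon = 0"
      using mon by (intro lookup_eq_0_if_vanishes_below) auto
    moreover have "g j = Poly_Mapping.single 0 (d j) + h"
      unfolding h_def by simp
    ultimately show ?thesis
      by (simp add: distrib_right lookup_add lookup_single_0_mult)
  qed
  then show thesis
    by (intro that[of d]) (simp add: g lookup_sum)
qed

lemma char_ideal_coeff_square_eq_mixed:
  assumes "p \<in> char_ideal m A" "l < i" "A l i = 1" "l \<in> {1..m}" "i \<in> {1..m}"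
  shows "Poly_Mapping.lookup p (Poly_Mapping.single i 2) =
    Poly_Mapping.lookup p (Poly_Mapping.single l 1 + Poly_Mapping.single i 1)"
proof -
  obtain d where d: "\<And>mon. mon_deg mon = 2 \<Longrightarrow>
      Poly_Mapping.lookup p mon = (\<Sum>j=1..m. d j * Poly_Mapping.lookup (theta_j m A j) mon)"
    using char_ideal_coeffs_degree_2[OF assms(1)] by blast
  have "Poly_Mapping.lookup p (Poly_Mapping.single i 2) = (\<Sum>j=1..m. d j * (if j = i then 1 else 0))"
    unfolding d[OF mon_deg_single] using lookup_theta_j_square[OF assms(5)] by (intro sum.cong) simp_all
  also have "\<dots> = Poly_Mapping.lookup p (Poly_Mapping.single l 1 + Poly_Mapping.single i 1)"
    unfolding d[OF mon_deg_single_1_add_single_1]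
    using lookup_theta_j_mixed[of l i A m] assms(2-4) by (intro sum.cong) simp_all
  finally show ?thesis .
qed

lemma sum_Xv_power2_in_char_ideal_iff:
  fixes c :: "nat \<Rightarrow> bit"
  assumes bott: "bott_matrix m A"
  shows "(\<Sum>i=1..m. Poly_Mapping.single 0 (c i) * Xv i ^ 2) \<in> char_ideal m A \<longleftrightarrow>
    (\<forall>i\<in>{1..m}. c i = 0 \<or> Xv i ^ 2 \<in> char_ideal m A)"
    (is "?W \<in> _ \<longleftrightarrow> _")
proof
  assume W: "?W \<in> char_ideal m A"
  have "Xv i ^ 2 \<in> char_ideal m A" if i: "i \<in> {1..m}" and "c i \<noteq> 0" for i
  proof -
    have "A l i = 0" if l: "l \<in> {1..m}" "l < i" for l
    proof (rule ccontr)
      assume "A l i \<noteq> 0"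
      then have "A l i = 1" using bott_matrix_entry(1)[OF bott l(1) i] by simp
      from char_ideal_coeff_square_eq_mixed[OF W l(2) this l(1) i] have "c i = 0"
        unfolding lookup_sum_Xv_power2_square[OF i] lookup_sum_Xv_power2_mixed[OF less_imp_neq[OF l(2)]] .
      with \<open>c i \<noteq> 0\<close> show False by simp
    qed
    then show "Xv i ^ 2 \<in> char_ideal m A"
      using theta_j_eq_Xv_power2[OF i] theta_j_in_char_ideal[OF i] by metis
  qed
  then show "\<forall>i\<in>{1..m}. c i = 0 \<or> Xv i ^ 2 \<in> char_ideal m A"
    by blast
next
  assume H: "\<forall>i\<in>{1..m}. c i = 0 \<or> Xv i ^ 2 \<in> char_ideal m A"
  have "Poly_Mapping.single 0 (c i) * Xv i ^ 2 \<in> char_ideal m A" if "i \<in> {1..m}" for i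
    using H[rule_format, OF that] by (cases "c i = 0") (simp_all add: zero_in_char_ideal)
  then show "?W \<in> char_ideal m A"
    by (rule sum_in_char_ideal)
qed

theorem theorem3p1:
  fixes n :: nat and A :: "nat \<Rightarrow> nat \<Rightarrow> nat" and jj :: "nat \<Rightarrow> nat"
  assumes bott: "bott_matrix (2*n) A"
    and part: "bij_betw jj {1..2*n} {1..2*n}"
    and cols: "\<forall>k\<in>{1..n}. \<forall>i\<in>{1..2*n}. A i (jj k) = A i (jj (k+n))"
  shows "same_image (2*n) A (w2_poly (2*n) A)
           (\<Sum>i=1..2*n. Poly_Mapping.single 0 (of_nat (\<Sum>k=1..n. bmat A (jj k) i)) * Xv i ^ 2)
       \<and> (has_spin (2*n) A \<longleftrightarrow>
           (\<forall>i\<in>{1..2*n}. even (\<Sum>k=1..n. bmat A (jj k) i) \<or> Xv i ^ 2 \<in> char_ideal (2*n) A))"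
proof -
  have w2: "w2_poly (2*n) A =
      (\<Sum>i=1..2*n. Poly_Mapping.single 0 (of_nat (\<Sum>k=1..n. bmat A (jj k) i)) * Xv i ^ 2)"
    unfolding w2_poly_eq_power2_sum_column_form[OF bott part cols] power2_sum_column_form ..
  have spin: "has_spin (2*n) A \<longleftrightarrow>
      (\<Sum>i=1..2*n. Poly_Mapping.single 0 (of_nat (\<Sum>k=1..n. bmat A (jj k) i)) * Xv i ^ 2)
        \<in> char_ideal (2*n) A"
    unfolding has_spin_def same_image_def w2 by simp
  show ?thesis
    unfolding spin sum_Xv_power2_in_char_ideal_iff[OF bott] of_nat_bit_eq_0_iff
      same_image_def w2 diff_self
    using zero_in_char_ideal by blast
qed

end
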